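(* Let $X$ be a nonempty countable set, $\mathcal D$ a distribution on $X$, $m\ge1$, $\rho$ any cost function on $X$, and $\mu\in\mathscr D^{m,\rho,\mathcal D}_{\mathrm{adaptive}}$. Let $S'\sim\mu$ and let $g$ be any random variable jointly distributed with $S'$ taking values in a finite nonempty set $G$. For $g_0\in G$ with $\Pr[g=g_0]>0$ let $\mathcal D'_{\mathrm{goal}}(g_0)=\mathbb E[\mathrm{Unif}(S')\mid g=g_0]$ (the law of a uniformly random coordinate of $S'$ conditioned on $g=g_0$). Then $$\mathbb E_{g}\Big[\inf_{\mathcal D'\in\mathcal C_\rho(\mathcal D)} d_{\mathrm{TV}}\big(\mathcal D',\mathcal D'_{\mathrm{goal}}(g)\big)\Big]\le\sqrt{\frac{\ln|G|}{2m}}.$$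
   Context: All distributions are discrete. A cost function on $X$ is $\rho:X\times X\to\mathbb R_{\ge0}\cup\{\infty\}$ with $\rho(x,x)=0$. For $S\in X^m$, $\mathcal C_\rho(S)=\{S'\in X^m:\frac1m\sum_i\rho(S_i,S'_i)\le1\}$. For a distribution $\mathcal D$ on $X$, $\mathcal C_\rho(\mathcal D)$ is the set of distributions $\mathcal D'$ on $X$ admitting a coupling of $x\sim\mathcal D$, $x'\sim\mathcal D'$ with $\mathbb E[\rho(x,x')]\le1$. $\mathscr D^{m,\rho,\mathcal D}_{\mathrm{adaptive}}$ is the set of distributions $\mu$ on $X^m$ for which there is a coupling of $S'\sim\mu$ and $S\sim\mathcal D^m$ with $S'\in\mathcal C_\rho(S)$ almost surely. For a tuple $S$, $\mathrm{Unif}(S)$ is the law of a uniformly random coordinate of $S$. *)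

theory Defs
  imports "HOL-Probability.Probability"
begin

definition cost_fun :: "('a \<Rightarrow> 'a \<Rightarrow> ennreal) \<Rightarrow> bool" where
  "cost_fun \<rho> \<longleftrightarrow> (\<forall>x. \<rho> x x = 0)"

definition cost_ball_tuple :: "('a \<Rightarrow> 'a \<Rightarrow> ennreal) \<Rightarrow> 'a list \<Rightarrow> 'a list set" where
  "cost_ball_tuple \<rho> S = {S'. length S' = length S \<and>
      (1 / of_nat (length S)) * (\<Sum>i<length S. \<rho> (S ! i) (S' ! i)) \<le> 1}"

definition cost_ball_dist :: "('a \<Rightarrow> 'a \<Rightarrow> ennreal) \<Rightarrow> 'a pmf \<Rightarrow> 'a pmf set" where
  "cost_ball_dist \<rho> D = {D'. \<exists>c :: ('a \<times> 'a) pmf. map_pmf fst c = D \<and> map_pmf snd c = D' \<and>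
      (\<integral>\<^sup>+ p. \<rho> (fst p) (snd p) \<partial>measure_pmf c) \<le> 1}"

definition adaptive_class :: "nat \<Rightarrow> ('a \<Rightarrow> 'a \<Rightarrow> ennreal) \<Rightarrow> 'a pmf \<Rightarrow> 'a list pmf set" where
  "adaptive_class m \<rho> D = {\<mu>. \<exists>\<nu> :: ('a list \<times> 'a list) pmf.
      map_pmf fst \<nu> = \<mu> \<and> map_pmf snd \<nu> = replicate_pmf m D \<and>
      (\<forall>p \<in> set_pmf \<nu>. fst p \<in> cost_ball_tuple \<rho> (snd p))}"

definition unif_coord :: "'a list \<Rightarrow> 'a pmf" where
  "unif_coord S = map_pmf (\<lambda>i. S ! i) (pmf_of_set {..<length S})"

definition tv_dist :: "'a pmf \<Rightarrow> 'a pmf \<Rightarrow> real" where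
  "tv_dist P Q = (SUP A. \<bar>measure_pmf.prob P A - measure_pmf.prob Q A\<bar>)"

text \<open>D'_goal(g0) = E[Unif(S') | g = g0], for a joint law J of (S', g).\<close>
definition goal_dist :: "('a list \<times> 'g) pmf \<Rightarrow> 'g \<Rightarrow> 'a pmf" where
  "goal_dist J g0 = bind_pmf (cond_pmf J {p. snd p = g0}) (\<lambda>p. unif_coord (fst p))"

end

theory Submission
  imports Defs
begin

text \<open>
  Couple the adaptively corrupted sample \<open>S'\<close> with a clean sample \<open>S \<sim> D\<^sup>m\<close> and condition on
  \<open>g = g\<^sub>0\<close>. Reading \<open>S\<close> and \<open>S'\<close> at the same uniformly random coordinate couples the
  conditioned clean empirical law \<open>Q(g\<^sub>0)\<close> with \<open>D'\<^sub>g\<^sub>o\<^sub>a\<^sub>l(g\<^sub>0)\<close> at average cost at most 1.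
  Composing a maximal coupling of \<open>D\<close> and \<open>Q(g\<^sub>0)\<close> with it, and staying put wherever the
  maximal coupling leaves the diagonal, gives some \<open>D' \<in> C\<^sub>\<rho>(D)\<close> within total variation
  \<open>Q(g\<^sub>0)(A) - D(A)\<close> of the goal, where \<open>A = {Q(g\<^sub>0) > D}\<close>. Averaged over \<open>g\<close>, this is the
  expected deviation between frequency in the clean sample and probability of an event that is
  chosen, after seeing the sample, among \<open>|G|\<close> candidates. Hoeffding's lemma and the soft-max bound
  give \<open>ln |G| / \<lambda> + \<lambda> / (8m)\<close> for every \<open>\<lambda> > 0\<close>, and the optimal \<open>\<lambda>\<close> yields \<open>\<surd>(ln |G| / 2m)\<close>.
\<close>

section \<open>Discrete distributions\<close>

lemma integrable_measure_pmf_bounded: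
  fixes f :: "'a \<Rightarrow> real"
  assumes "\<And>x. x \<in> set_pmf p \<Longrightarrow> \<bar>f x\<bar> \<le> B"
  shows "integrable (measure_pmf p) f"
  by (rule measure_pmf.integrable_const_bound[where B=B]) (use assms in \<open>auto simp: AE_measure_pmf_iff\<close>)

lemma expectation_bind_pmf:
  fixes f :: "'b \<Rightarrow> real"
  assumes "\<And>y. \<bar>f y\<bar> \<le> B"
  shows "measure_pmf.expectation (bind_pmf p q) f =
         measure_pmf.expectation p (\<lambda>x. measure_pmf.expectation (q x) f)"
  unfolding measure_pmf_bind
  by (rule integral_bind[where K="count_space UNIV" and B=B and B'=1])
     (use assms in \<open>auto simp: measure_pmf.emeasure_space_1 measure_pmf_in_subprob_algebra
                          intro!: measure_pmf.finite_measure\<close>)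

lemma measure_bind_pmf:
  "measure_pmf.prob (bind_pmf p q) B = measure_pmf.expectation p (\<lambda>x. measure_pmf.prob (q x) B)"
  using expectation_bind_pmf[of "indicator B" 1 p q] by (simp add: indicator_def)

lemma bind_cond_pmf_fibers: "bind_pmf (map_pmf f p) (\<lambda>y. cond_pmf p {x. f x = y}) = p"
  by (rule bind_cond_pmf_cancel) (auto simp: vimage_def)

lemma expectation_cond_pmf_fibers:
  fixes F :: "'b \<Rightarrow> 'a \<Rightarrow> real"
  assumes "\<And>y x. \<bar>F y x\<bar> \<le> B"
  shows "measure_pmf.expectation (map_pmf f p)
           (\<lambda>y. measure_pmf.expectation (cond_pmf p {x. f x = y}) (F y))
         = measure_pmf.expectation p (\<lambda>x. F (f x) x)"
proof -
  have "measure_pmf.expectation p (\<lambda>x. F (f x) x)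
      = measure_pmf.expectation (map_pmf f p)
          (\<lambda>y. measure_pmf.expectation (cond_pmf p {x. f x = y}) (\<lambda>x. F (f x) x))"
    by (subst (1) bind_cond_pmf_fibers[of f p, symmetric]) (rule expectation_bind_pmf, rule assms)
  also have "\<dots> = measure_pmf.expectation (map_pmf f p)
                     (\<lambda>y. measure_pmf.expectation (cond_pmf p {x. f x = y}) (F y))"
  proof (intro integral_cong_AE)
    show "AE y in map_pmf f p. measure_pmf.expectation (cond_pmf p {x. f x = y}) (\<lambda>x. F (f x) x)
                               = measure_pmf.expectation (cond_pmf p {x. f x = y}) (F y)"
    proof (rule AE_pmfI)
      fix y assume "y \<in> set_pmf (map_pmf f p)"
      then have "set_pmf (cond_pmf p {x. f x = y}) = set_pmf p \<inter> {x. f x = y}"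
        by (intro set_cond_pmf) auto
      then show "measure_pmf.expectation (cond_pmf p {x. f x = y}) (\<lambda>x. F (f x) x)
                   = measure_pmf.expectation (cond_pmf p {x. f x = y}) (F y)"
        by (intro integral_cong_AE) (auto simp: AE_measure_pmf_iff)
    qed
  qed simp_all
  finally show ?thesis ..
qed

lemma pmf_gluing:
  fixes p :: "('a \<times> 'b) pmf" and q :: "('a \<times> 'c) pmf"
  assumes "map_pmf fst p = map_pmf fst q"
  obtains r :: "('a \<times> 'b \<times> 'c) pmf"
    where "map_pmf (\<lambda>(a, b, c). (a, b)) r = p" and "map_pmf (\<lambda>(a, b, c). (a, c)) r = q"
proof
  define K where "K a = cond_pmf q {x. fst x = a}" for a
  have K: "fst x = a" if "(a, b) \<in> set_pmf p" "x \<in> set_pmf (K a)" for a b x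
  proof -
    have "a \<in> set_pmf (map_pmf fst q)"
      using that(1) unfolding assms[symmetric] by force
    then show ?thesis
      using that(2) unfolding K_def by (subst (asm) set_cond_pmf) auto
  qed
  define r where "r = bind_pmf p (\<lambda>(a, b). map_pmf (\<lambda>x. (a, b, snd x)) (K a))"
  show "map_pmf (\<lambda>(a, b, c). (a, b)) r = p"
    by (simp add: r_def map_bind_pmf map_pmf_comp case_prod_beta' bind_return_pmf')
  have "map_pmf (\<lambda>(a, b, c). (a, c)) r = bind_pmf p (\<lambda>x. K (fst x))"
    unfolding r_def map_bind_pmf
    by (intro bind_pmf_cong) (auto simp: map_pmf_comp intro!: map_pmf_idI, metis K fst_conv)
  also have "\<dots> = bind_pmf (map_pmf fst q) K"
    by (simp add: bind_map_pmf flip: assms)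
  also have "\<dots> = q"
    unfolding K_def by (rule bind_cond_pmf_fibers)
  finally show "map_pmf (\<lambda>(a, b, c). (a, c)) r = q" .
qed

lemma ennreal_measure_pmf_eq_nn_integral_count_space:
  "ennreal (measure_pmf.prob P S) = (\<integral>\<^sup>+x. ennreal (indicator S x * pmf P x) \<partial>count_space UNIV)"
proof -
  have "ennreal (measure_pmf.prob P S) = (\<integral>\<^sup>+x. indicator S x \<partial>P)"
    by (simp add: measure_pmf.emeasure_eq_measure)
  also have "\<dots> = (\<integral>\<^sup>+x. ennreal (indicator S x * pmf P x) \<partial>count_space UNIV)"
    by (auto simp: nn_integral_measure_pmf intro!: nn_integral_cong split: split_indicator)
  finally show ?thesis .
qed

lemma nn_integral_count_space_pmf_diff:
  assumes "\<And>x. x \<in> S \<Longrightarrow> pmf P x \<le> pmf Q x"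
  shows "(\<integral>\<^sup>+x. ennreal (indicator S x * (pmf Q x - pmf P x)) \<partial>count_space UNIV)
           = ennreal (measure_pmf.prob Q S - measure_pmf.prob P S)"
proof -
  let ?d = "\<integral>\<^sup>+x. ennreal (indicator S x * (pmf Q x - pmf P x)) \<partial>count_space UNIV"
  have "ennreal (measure_pmf.prob Q S)
      = (\<integral>\<^sup>+x. ennreal (indicator S x * (pmf Q x - pmf P x)) + ennreal (indicator S x * pmf P x) \<partial>count_space UNIV)"
    unfolding ennreal_measure_pmf_eq_nn_integral_count_space
    by (intro nn_integral_cong) (auto simp: assms ennreal_plus[symmetric] simp del: ennreal_plus split: split_indicator)
  also have "\<dots> = ?d + ennreal (measure_pmf.prob P S)"
    unfolding ennreal_measure_pmf_eq_nn_integral_count_space by (rule nn_integral_add) auto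
  finally have "?d = ennreal (measure_pmf.prob Q S) - ennreal (measure_pmf.prob P S)"
    by (simp add: ennreal_add_diff_cancel_right)
  then show ?thesis
    by (simp add: ennreal_minus)
qed

section \<open>Total variation and couplings\<close>

lemma abs_measure_pmf_diff_le_1: "\<bar>measure_pmf.prob P A - measure_pmf.prob Q B\<bar> \<le> 1"
  using measure_pmf.prob_le_1[of P A] measure_pmf.prob_le_1[of Q B]
    measure_nonneg[of "measure_pmf P" A] measure_nonneg[of "measure_pmf Q" B]
  by linarith

lemma tv_dist_nonneg: "tv_dist P Q \<ge> 0"
proof -
  have "bdd_above (range (\<lambda>A. \<bar>measure_pmf.prob P A - measure_pmf.prob Q A\<bar>))"
    using abs_measure_pmf_diff_le_1 by (intro bdd_aboveI[where M=1]) blast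
  then have "\<bar>measure_pmf.prob P {} - measure_pmf.prob Q {}\<bar> \<le> tv_dist P Q"
    unfolding tv_dist_def by (rule cSUP_upper[rotated]) simp
  then show ?thesis by simp
qed

lemma tv_dist_le:
  assumes "\<And>A. \<bar>measure_pmf.prob P A - measure_pmf.prob Q A\<bar> \<le> d"
  shows "tv_dist P Q \<le> d"
  unfolding tv_dist_def using assms by (intro cSUP_least) auto

lemma tv_dist_map_pmf_le:
  assumes "\<And>x. x \<in> set_pmf p \<Longrightarrow> f x \<noteq> g x \<Longrightarrow> x \<in> N"
  shows "tv_dist (map_pmf f p) (map_pmf g p) \<le> measure_pmf.prob p N"
proof (rule tv_dist_le)
  fix A
  have "measure_pmf.prob p (f -` A) \<le> measure_pmf.prob p (g -` A) + measure_pmf.prob p N"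
    if "\<And>x. x \<in> set_pmf p \<Longrightarrow> f x \<noteq> g x \<Longrightarrow> x \<in> N" for f g :: "_ \<Rightarrow> 'b"
  proof -
    have "measure_pmf.prob p (f -` A) = measure_pmf.prob p (f -` A \<inter> set_pmf p)"
      by (rule measure_Int_set_pmf[symmetric])
    also have "\<dots> \<le> measure_pmf.prob p (g -` A \<union> N)"
      using that by (intro measure_pmf.finite_measure_mono) (force, simp)
    also have "\<dots> \<le> measure_pmf.prob p (g -` A) + measure_pmf.prob p N"
      by (rule measure_Un_le) auto
    finally show ?thesis .
  qed
  from this[of f g] this[of g f] assms
  show "\<bar>measure_pmf.prob (map_pmf f p) A - measure_pmf.prob (map_pmf g p) A\<bar> \<le> measure_pmf.prob p N"
    by (fastforce simp: abs_le_iff algebra_simps)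
qed

lemma nn_integral_pmf_excess:
  fixes P Q :: "'a pmf"
  defines "A \<equiv> {x. pmf P x < pmf Q x}"
  shows "(\<integral>\<^sup>+x. ennreal (pmf Q x - min (pmf P x) (pmf Q x)) \<partial>count_space UNIV)
           = ennreal (measure_pmf.prob Q A - measure_pmf.prob P A)"
    and "(\<integral>\<^sup>+x. ennreal (pmf P x - min (pmf P x) (pmf Q x)) \<partial>count_space UNIV)
           = ennreal (measure_pmf.prob Q A - measure_pmf.prob P A)"
    and "measure_pmf.prob P A \<le> measure_pmf.prob Q A"
proof -
  show "(\<integral>\<^sup>+x. ennreal (pmf Q x - min (pmf P x) (pmf Q x)) \<partial>count_space UNIV)
          = ennreal (measure_pmf.prob Q A - measure_pmf.prob P A)"
    by (subst nn_integral_count_space_pmf_diff[symmetric])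
       (auto intro!: nn_integral_cong simp: A_def split: split_indicator)
  have "(\<integral>\<^sup>+x. ennreal (pmf P x - min (pmf P x) (pmf Q x)) \<partial>count_space UNIV)
      = ennreal (measure_pmf.prob P (- A) - measure_pmf.prob Q (- A))"
    by (subst nn_integral_count_space_pmf_diff[symmetric])
       (auto intro!: nn_integral_cong simp: A_def split: split_indicator)
  also have "measure_pmf.prob P (- A) - measure_pmf.prob Q (- A) = measure_pmf.prob Q A - measure_pmf.prob P A"
    using measure_pmf.prob_compl[of A P] measure_pmf.prob_compl[of A Q]
    by (simp add: Compl_eq_Diff_UNIV)
  finally show "(\<integral>\<^sup>+x. ennreal (pmf P x - min (pmf P x) (pmf Q x)) \<partial>count_space UNIV)
                  = ennreal (measure_pmf.prob Q A - measure_pmf.prob P A)" .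
  have "ennreal (measure_pmf.prob P A) \<le> ennreal (measure_pmf.prob Q A)"
    unfolding ennreal_measure_pmf_eq_nn_integral_count_space
    by (intro nn_integral_mono ennreal_leI) (auto simp: A_def split: split_indicator)
  then show "measure_pmf.prob P A \<le> measure_pmf.prob Q A"
    by (simp add: ennreal_le_iff)
qed

lemma excess_pmf:
  fixes P Q :: "'a pmf"
  defines "A \<equiv> {x. pmf P x < pmf Q x}"
  obtains R where "\<And>y. (measure_pmf.prob Q A - measure_pmf.prob P A) * pmf R y
                         = pmf Q y - min (pmf P y) (pmf Q y)"
proof
  define \<delta> where "\<delta> = measure_pmf.prob Q A - measure_pmf.prob P A"
  note excess = nn_integral_pmf_excess(1)[where P=P and Q=Q, folded A_def \<delta>_def]
  fix y
  show "\<delta> * pmf (embed_pmf (\<lambda>y. (pmf Q y - min (pmf P y) (pmf Q y)) / \<delta>)) y = pmf Q y - min (pmf P y) (pmf Q y)"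
  proof (cases "\<delta> = 0")
    case True
    then have "AE y in count_space UNIV. ennreal (pmf Q y - min (pmf P y) (pmf Q y)) = 0"
      using excess by (subst nn_integral_0_iff_AE[symmetric]) auto
    then show ?thesis
      using True by (simp add: AE_count_space)
  next
    case False
    then have "\<delta> > 0"
      using nn_integral_pmf_excess(3)[where P=P and Q=Q] by (simp add: \<delta>_def A_def)
    have "(\<integral>\<^sup>+y. ennreal ((pmf Q y - min (pmf P y) (pmf Q y)) / \<delta>) \<partial>count_space UNIV)
        = (\<integral>\<^sup>+y. ennreal (pmf Q y - min (pmf P y) (pmf Q y)) \<partial>count_space UNIV) * ennreal (1 / \<delta>)"
      using \<open>\<delta> > 0\<close>
      by (subst nn_integral_multc[symmetric]) (auto intro!: nn_integral_cong simp: ennreal_mult''[symmetric])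
    also have "\<dots> = 1"
      using \<open>\<delta> > 0\<close> by (simp add: excess ennreal_mult'[symmetric])
    finally show ?thesis
      using \<open>\<delta> > 0\<close> by (simp add: pmf_embed_pmf)
  qed
qed

text \<open>Keep \<open>x \<sim> P\<close> with probability \<open>min (P x) (Q x) / P x\<close>, otherwise resample from the
  normalised excess of \<open>Q\<close> over \<open>P\<close>.\<close>
lemma pmf_maximal_coupling:
  fixes P Q :: "'a pmf"
  defines "A \<equiv> {x. pmf P x < pmf Q x}"
  obtains M where "map_pmf fst M = P" "map_pmf snd M = Q"
    and "measure_pmf.prob M {x. fst x \<noteq> snd x} \<le> measure_pmf.prob Q A - measure_pmf.prob P A"
proof -
  define \<delta> where "\<delta> = measure_pmf.prob Q A - measure_pmf.prob P A"
  define m where "m x = min (pmf P x) (pmf Q x)" for x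
  define a where "a x = m x / pmf P x" for x
  have a: "0 \<le> a x" "a x \<le> 1" "pmf P x * a x = m x" for x
    by (auto simp: a_def m_def min_def field_simps)
  have "ennreal (pmf P x) * ennreal (1 - a x) = ennreal (pmf P x - m x)" for x
    using a[of x] by (simp add: ennreal_mult'[symmetric] right_diff_distrib)
  then have excess_P: "(\<integral>\<^sup>+x. ennreal (1 - a x) \<partial>P) = ennreal \<delta>"
    using nn_integral_pmf_excess(2)[where P=P and Q=Q] by (simp add: nn_integral_measure_pmf m_def \<delta>_def A_def)
  have "\<delta> \<ge> 0"
    using nn_integral_pmf_excess(3)[where P=P and Q=Q] by (simp add: \<delta>_def A_def)
  obtain R where R: "\<And>y. \<delta> * pmf R y = pmf Q y - m y"
    using excess_pmf[where P=P and Q=Q] unfolding \<delta>_def m_def A_def by blast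
  define M where "M = bind_pmf P (\<lambda>x. bind_pmf (bernoulli_pmf (a x))
                        (\<lambda>b. if b then return_pmf (x, x) else map_pmf (Pair x) R))"
  show thesis
  proof
    show "map_pmf fst M = P"
      by (simp add: M_def map_bind_pmf map_pmf_comp if_distrib bind_return_pmf' cong: if_cong)
    show "map_pmf snd M = Q"
    proof (rule pmf_eqI)
      fix y
      have "ennreal (pmf (map_pmf snd M) y)
          = (\<integral>\<^sup>+x. ennreal (a x) * indicator {y} x + ennreal (1 - a x) * ennreal (pmf R y) \<partial>P)"
        using a by (auto simp: M_def map_bind_pmf map_pmf_comp if_distrib ennreal_pmf_bind mult.commute
                          intro!: nn_integral_cong split: split_indicator)
      also have "\<dots> = ennreal (a y * pmf P y) + ennreal \<delta> * ennreal (pmf R y)"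
        using a by (simp add: nn_integral_add nn_integral_multc excess_P emeasure_pmf_single ennreal_mult')
      also have "\<dots> = ennreal (pmf Q y)"
        using a[of y] R[of y] \<open>\<delta> \<ge> 0\<close>
        by (simp add: m_def ennreal_mult'[symmetric] ennreal_plus[symmetric] mult.commute del: ennreal_plus)
      finally show "pmf (map_pmf snd M) y = pmf Q y"
        by simp
    qed
    have "ennreal (measure_pmf.expectation P (\<lambda>x. 1 - a x)) = ennreal \<delta>"
      using a by (subst nn_integral_eq_integral[symmetric])
                 (auto simp: excess_P intro!: integrable_measure_pmf_bounded[where B=1])
    then have E_excess: "measure_pmf.expectation P (\<lambda>x. 1 - a x) = \<delta>"
      using \<open>\<delta> \<ge> 0\<close> a by (simp add: integral_nonneg_AE)
    have "measure_pmf.prob M {x. fst x \<noteq> snd x} \<le> measure_pmf.expectation P (\<lambda>x. 1 - a x)"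
      unfolding M_def measure_bind_pmf
      using a by (intro integral_mono)
                 (auto intro!: integrable_measure_pmf_bounded[where B=1] mult_le_one
                       simp: abs_le_iff mult_left_le_one_le)
    then show "measure_pmf.prob M {x. fst x \<noteq> snd x} \<le> measure_pmf.prob Q A - measure_pmf.prob P A"
      by (simp add: E_excess \<delta>_def)
  qed
qed

lemma self_in_cost_ball_dist:
  assumes "cost_fun \<rho>"
  shows "D \<in> cost_ball_dist \<rho> D"
  unfolding cost_ball_dist_def
  using assms by (auto intro!: exI[of _ "map_pmf (\<lambda>x. (x, x)) D"] simp: map_pmf_comp cost_fun_def)

text \<open>Transport \<open>x\<close> along \<open>W\<close> when \<open>M\<close> pairs it with itself and leave it in place otherwise:
  staying put is free since \<open>\<rho> x x = 0\<close>, and the two outcomes can only differ off the diagonal of \<open>M\<close>.\<close>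
lemma cost_ball_dist_tv_dist_le:
  fixes W M :: "('a \<times> 'a) pmf"
  assumes "cost_fun \<rho>" and cost: "(\<integral>\<^sup>+w. \<rho> (fst w) (snd w) \<partial>W) \<le> 1"
    and M: "map_pmf fst M = D" "map_pmf snd M = map_pmf fst W"
  obtains D' where "D' \<in> cost_ball_dist \<rho> D"
    and "tv_dist D' (map_pmf snd W) \<le> measure_pmf.prob M {x. fst x \<noteq> snd x}"
proof -
  define K where "K y = cond_pmf W {w. fst w = y}" for y
  have W: "bind_pmf (map_pmf fst W) K = W"
    unfolding K_def by (rule bind_cond_pmf_fibers)
  have K: "fst w = y" if "y \<in> set_pmf (map_pmf snd M)" "w \<in> set_pmf (K y)" for y w
    using that unfolding M K_def by (subst (asm) set_cond_pmf) auto
  define T where "T = bind_pmf M (\<lambda>(x, y). map_pmf (\<lambda>w. ((x, y), if x = y then snd w else x, snd w)) (K y))"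
  have T_fst: "map_pmf fst T = M"
    by (simp add: T_def map_bind_pmf case_prod_beta' map_pmf_comp bind_return_pmf')
  have T_snd: "map_pmf (\<lambda>t. snd (snd t)) T = map_pmf snd W"
    by (subst W[symmetric]) (simp add: T_def map_bind_pmf case_prod_beta' map_pmf_comp M(2)[symmetric] bind_map_pmf)
  define c where "c = map_pmf (\<lambda>t. (fst (fst t), fst (snd t))) T"
  have "map_pmf fst c = D"
    using T_fst M(1) by (simp add: c_def map_pmf_comp flip: map_pmf_comp[of fst fst])
  moreover have "(\<integral>\<^sup>+v. \<rho> (fst v) (snd v) \<partial>c) \<le> 1"
  proof -
    have diag: "\<rho> x z \<le> \<rho> w z" if "(x, x) \<in> set_pmf M" "(w, z) \<in> set_pmf (K x)" for x w z
      using K[of x "(w, z)"] that(2) image_eqI[of x snd, OF _ that(1)] by simp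
    have "(\<integral>\<^sup>+v. \<rho> (fst v) (snd v) \<partial>c)
        \<le> (\<integral>\<^sup>+v. (\<integral>\<^sup>+w. \<rho> (fst w) (snd w) \<partial>K (snd v)) \<partial>M)"
      unfolding c_def T_def
      using \<open>cost_fun \<rho>\<close>
      by (auto simp: case_prod_beta' AE_measure_pmf_iff cost_fun_def intro!: nn_integral_mono_AE)
         (rule diag)
    also have "\<dots> = (\<integral>\<^sup>+w. \<rho> (fst w) (snd w) \<partial>W)"
      by (subst W[symmetric]) (simp add: M(2)[symmetric])
    finally show ?thesis
      using cost by simp
  qed
  ultimately have "map_pmf snd c \<in> cost_ball_dist \<rho> D"
    unfolding cost_ball_dist_def by blast
  moreover have "tv_dist (map_pmf snd c) (map_pmf snd W) \<le> measure_pmf.prob M {x. fst x \<noteq> snd x}"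
  proof -
    have "tv_dist (map_pmf snd c) (map_pmf snd W)
        = tv_dist (map_pmf (\<lambda>t. fst (snd t)) T) (map_pmf (\<lambda>t. snd (snd t)) T)"
      by (simp add: c_def T_snd map_pmf_comp)
    also have "\<dots> \<le> measure_pmf.prob T (fst -` {x. fst x \<noteq> snd x})"
      by (rule tv_dist_map_pmf_le) (auto simp: T_def)
    finally show ?thesis
      by (simp flip: T_fst)
  qed
  ultimately show thesis
    by (rule that)
qed

lemma coordinate_coupling:
  fixes p :: "('a list \<times> 'a list) pmf"
  assumes "cost_fun \<rho>" and ball: "\<And>S S'. (S, S') \<in> set_pmf p \<Longrightarrow> S' \<in> cost_ball_tuple \<rho> S"
  defines "W \<equiv> bind_pmf p (\<lambda>(S, S'). map_pmf (\<lambda>i. (S ! i, S' ! i)) (pmf_of_set {..<length S}))"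
  shows "map_pmf fst W = bind_pmf p (\<lambda>(S, S'). unif_coord S)"
    and "map_pmf snd W = bind_pmf p (\<lambda>(S, S'). unif_coord S')"
    and "(\<integral>\<^sup>+w. \<rho> (fst w) (snd w) \<partial>W) \<le> 1"
proof -
  have len: "length S' = length S" if "(S, S') \<in> set_pmf p" for S S'
    using ball[OF that] by (simp add: cost_ball_tuple_def)
  show "map_pmf fst W = bind_pmf p (\<lambda>(S, S'). unif_coord S)"
    by (simp add: W_def map_bind_pmf map_pmf_comp unif_coord_def case_prod_beta')
  show "map_pmf snd W = bind_pmf p (\<lambda>(S, S'). unif_coord S')"
    unfolding W_def map_bind_pmf
    by (intro bind_pmf_cong) (auto simp: map_pmf_comp unif_coord_def len)
  have "(\<integral>\<^sup>+i. \<rho> (S ! i) (S' ! i) \<partial>pmf_of_set {..<length S}) \<le> 1"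
    if "(S, S') \<in> set_pmf p" for S S'
  proof (cases "S = []")
    case True
    then show ?thesis
      using len[OF that] \<open>cost_fun \<rho>\<close> by (simp add: cost_fun_def)
  next
    case False
    then show ?thesis
      using ball[OF that]
      by (subst nn_integral_pmf_of_set)
         (auto simp: cost_ball_tuple_def divide_ennreal_def mult.commute)
  qed
  then have "(\<integral>\<^sup>+v. (\<integral>\<^sup>+i. \<rho> (fst v ! i) (snd v ! i) \<partial>pmf_of_set {..<length (fst v)}) \<partial>p)
      \<le> (\<integral>\<^sup>+v. 1 \<partial>p)"
    by (intro nn_integral_mono_AE) (auto simp: AE_measure_pmf_iff)
  then show "(\<integral>\<^sup>+w. \<rho> (fst w) (snd w) \<partial>W) \<le> 1"
    by (simp add: W_def case_prod_beta' measure_pmf.emeasure_space_1)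
qed

section \<open>Deviation of empirical frequencies\<close>

definition empirical_dev :: "'a pmf \<Rightarrow> 'a set \<Rightarrow> 'a list \<Rightarrow> real" where
  "empirical_dev D B xs = measure_pmf.prob (unif_coord xs) B - measure_pmf.prob D B"

lemma abs_empirical_dev_le_1: "\<bar>empirical_dev D B xs\<bar> \<le> 1"
  unfolding empirical_dev_def by (rule abs_measure_pmf_diff_le_1)

lemma empirical_dev_eq_sum_list:
  assumes "xs \<noteq> []"
  shows "empirical_dev D B xs = (\<Sum>x\<leftarrow>xs. indicator B x - measure_pmf.prob D B) / length xs"
proof -
  have "measure_pmf.prob (unif_coord xs) B =
      measure_pmf.expectation (pmf_of_set {..<length xs}) (indicator ((!) xs -` B))"
    by (simp add: unif_coord_def)
  also have "\<dots> = (\<Sum>i<length xs. indicator B (xs ! i)) / length xs"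
    using assms by (subst integral_pmf_of_set) (auto simp: indicator_vimage)
  finally show ?thesis
    using assms by (simp add: empirical_dev_def sum_list_sum_nth atLeast0LessThan sum_subtractf field_simps)
qed

lemma nn_integral_replicate_pmf_prod_list:
  fixes g :: "'a \<Rightarrow> real"
  assumes "\<And>x. g x \<ge> 0"
  shows "(\<integral>\<^sup>+xs. ennreal (prod_list (map g xs)) \<partial>replicate_pmf m D) = (\<integral>\<^sup>+x. ennreal (g x) \<partial>D) ^ m"
proof (induction m)
  case (Suc m)
  have "prod_list (map g xs) \<ge> 0" for xs
    using assms by (intro prod_list_nonneg) auto
  then have "(\<integral>\<^sup>+xs. ennreal (prod_list (map g xs)) \<partial>replicate_pmf (Suc m) D)
      = (\<integral>\<^sup>+x. ennreal (g x) * (\<integral>\<^sup>+xs. ennreal (prod_list (map g xs)) \<partial>replicate_pmf m D) \<partial>D)"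
    using assms by (simp add: ennreal_mult nn_integral_cmult)
  then show ?case
    by (simp add: Suc nn_integral_multc mult.commute)
qed simp

lemma exp_sum_list:
  fixes f :: "'a \<Rightarrow> real"
  shows "exp (sum_list (map f xs)) = prod_list (map (\<lambda>x. exp (f x)) xs)"
  by (induction xs) (simp_all add: exp_add)

text \<open>Hoeffding's lemma, once for each of the \<open>m\<close> independent coordinates.\<close>
lemma expectation_exp_empirical_dev_le:
  fixes l :: real
  assumes "l > 0" "m > 0"
  shows "measure_pmf.expectation (replicate_pmf m D) (\<lambda>xs. exp (l * empirical_dev D B xs))
           \<le> exp (l\<^sup>2 / (8 * m))"
proof -
  let ?g = "\<lambda>x. exp (l / m * (indicator B x - measure_pmf.prob D B))"
  have "exp (l * empirical_dev D B xs) = prod_list (map ?g xs)"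
    if "xs \<in> set_pmf (replicate_pmf m D)" for xs
  proof -
    have "xs \<noteq> []" "length xs = m"
      using that assms by (auto simp: set_replicate_pmf)
    then have "l * empirical_dev D B xs = (\<Sum>x\<leftarrow>xs. l / m * (indicator B x - measure_pmf.prob D B))"
      by (subst sum_list_const_mult) (simp add: empirical_dev_eq_sum_list)
    then show ?thesis
      by (simp add: exp_sum_list)
  qed
  moreover have "integrable (replicate_pmf m D) (\<lambda>xs. exp (l * empirical_dev D B xs))"
    using abs_empirical_dev_le_1[of D B] \<open>l > 0\<close>
    by (intro integrable_measure_pmf_bounded[where B="exp l"]) (simp add: mult_le_cancel_left1 abs_le_iff)
  ultimately have "ennreal (measure_pmf.expectation (replicate_pmf m D) (\<lambda>xs. exp (l * empirical_dev D B xs)))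
      = (\<integral>\<^sup>+xs. ennreal (prod_list (map ?g xs)) \<partial>replicate_pmf m D)"
    by (subst nn_integral_eq_integral[symmetric]) (auto intro!: nn_integral_cong_AE simp: AE_measure_pmf_iff)
  also have "\<dots> = (\<integral>\<^sup>+x. ennreal (?g x) \<partial>D) ^ m"
    by (rule nn_integral_replicate_pmf_prod_list) simp
  also have "\<dots> \<le> ennreal (exp ((l / m)\<^sup>2 / 8)) ^ m"
  proof (intro power_mono)
    interpret interval_bounded_random_variable "measure_pmf D" "indicator B :: _ \<Rightarrow> real" 0 1
      by unfold_locales auto
    show "(\<integral>\<^sup>+x. ennreal (?g x) \<partial>D) \<le> ennreal (exp ((l / m)\<^sup>2 / 8))"
      using Hoeffdings_lemma_nn_integral[of "l / m"] assms by simp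
  qed simp
  also have "\<dots> = ennreal (exp (l\<^sup>2 / (8 * m)))"
    using assms by (simp add: ennreal_power exp_of_nat_mult[symmetric] power2_eq_square)
  finally show ?thesis
    by (simp add: ennreal_le_iff)
qed

lemma expectation_Max_le_of_mgf:
  fixes X :: "'i \<Rightarrow> 'a \<Rightarrow> real" and l c :: real
  assumes "finite I" "I \<noteq> {}" "l > 0"
    and bounded: "\<And>i x. \<bar>X i x\<bar> \<le> B"
    and mgf: "\<And>i. i \<in> I \<Longrightarrow> measure_pmf.expectation p (\<lambda>x. exp (l * X i x)) \<le> exp (l\<^sup>2 * c)"
  shows "measure_pmf.expectation p (\<lambda>x. Max ((\<lambda>i. X i x) ` I)) \<le> ln (card I) / l + l * c"
proof -
  define M where "M = (\<lambda>x. Max ((\<lambda>i. X i x) ` I))"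
  have M_in: "\<exists>i\<in>I. M x = X i x" for x
  proof -
    have "M x \<in> (\<lambda>i. X i x) ` I"
      unfolding M_def using assms(1,2) by (intro Max_in) auto
    then show ?thesis by blast
  qed
  have exp_bounded: "\<bar>exp (l * X i x)\<bar> \<le> exp (l * B)" for i x
    using bounded[of i x] \<open>l > 0\<close> by (simp add: abs_le_iff)
  have int_X: "integrable p (\<lambda>x. exp (l * X i x))" for i
    using exp_bounded by (rule integrable_measure_pmf_bounded)
  have int_M: "integrable p M" "integrable p (\<lambda>x. exp (l * M x))"
    using M_in bounded exp_bounded by (metis integrable_measure_pmf_bounded)+
  have "exp (l * measure_pmf.expectation p M) \<le> measure_pmf.expectation p (\<lambda>x. exp (l * M x))"
    using int_M convex_on_exp[of l] \<open>l > 0\<close>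
    by (intro measure_pmf.jensens_inequality[where I=UNIV]) auto
  also have "\<dots> \<le> measure_pmf.expectation p (\<lambda>x. \<Sum>i\<in>I. exp (l * X i x))"
  proof (intro integral_mono)
    fix x
    obtain i where "i \<in> I" "M x = X i x" using M_in by blast
    then show "exp (l * M x) \<le> (\<Sum>i\<in>I. exp (l * X i x))"
      using \<open>finite I\<close> by (auto intro: member_le_sum)
  qed (use int_X int_M in auto)
  also have "\<dots> = (\<Sum>i\<in>I. measure_pmf.expectation p (\<lambda>x. exp (l * X i x)))"
    using int_X by (rule Bochner_Integration.integral_sum)
  also have "\<dots> \<le> card I * exp (l\<^sup>2 * c)"
    using sum_mono[OF mgf] by simp
  finally have "l * measure_pmf.expectation p M \<le> ln (card I * exp (l\<^sup>2 * c))"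
    using assms(1,2) by (subst ln_ge_iff) (auto simp: card_gt_0_iff)
  then have "l * measure_pmf.expectation p M \<le> ln (card I) + l\<^sup>2 * c"
    using assms(1,2) by (simp add: ln_mult card_gt_0_iff)
  then have "measure_pmf.expectation p M \<le> ln (card I) / l + l * c"
    using \<open>l > 0\<close> by (simp add: field_simps power2_eq_square)
  then show ?thesis
    unfolding M_def .
qed

lemma le_sqrt_of_le_div_plus:
  fixes E L c :: real
  assumes "L \<ge> 0" "c > 0" and le: "\<And>l. l > 0 \<Longrightarrow> E \<le> L / l + l * c"
  shows "E \<le> 2 * sqrt (L * c)"
proof (cases "L = 0")
  case True
  show ?thesis
  proof (rule ccontr)
    assume "\<not> ?thesis"
    then have "E > 0" using True by simp
    then show False
      using le[of "E / (2 * c)"] True \<open>c > 0\<close> by simp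
  qed
next
  case False
  define l where "l = sqrt (L / c)"
  have "l > 0" "l\<^sup>2 = L / c"
    using False assms(1,2) by (auto simp: l_def)
  then have "L / l + l * c = 2 * (l * c)"
    using \<open>c > 0\<close> by (simp add: field_simps power2_eq_square)
  also have "\<dots> = 2 * sqrt (L * c)"
    using assms(1,2) by (simp add: l_def real_sqrt_mult real_sqrt_divide field_simps)
  finally show ?thesis
    using le[OF \<open>l > 0\<close>] by simp
qed

lemma expectation_Max_empirical_dev_le:
  fixes A :: "'i \<Rightarrow> 'a set"
  assumes "finite I" "I \<noteq> {}" "m > 0"
  shows "measure_pmf.expectation (replicate_pmf m D) (\<lambda>xs. Max ((\<lambda>i. empirical_dev D (A i) xs) ` I))
           \<le> sqrt (ln (card I) / (2 * real m))"
proof -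
  have "measure_pmf.expectation (replicate_pmf m D) (\<lambda>xs. Max ((\<lambda>i. empirical_dev D (A i) xs) ` I))
          \<le> 2 * sqrt (ln (card I) * (1 / (8 * m)))"
  proof (rule le_sqrt_of_le_div_plus)
    show "ln (card I) \<ge> 0" "1 / (8 * m) > 0"
      using assms by (auto simp: Suc_le_eq card_gt_0_iff)
    fix l :: real assume "l > 0"
    then show "measure_pmf.expectation (replicate_pmf m D) (\<lambda>xs. Max ((\<lambda>i. empirical_dev D (A i) xs) ` I))
                 \<le> ln (card I) / l + l * (1 / (8 * m))"
      using assms abs_empirical_dev_le_1 expectation_exp_empirical_dev_le[OF \<open>l > 0\<close> \<open>m > 0\<close>]
      by (intro expectation_Max_le_of_mgf[where B=1]) (simp_all add: power2_eq_square)
  qed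
  also have "\<dots> = sqrt (ln (card I) / (2 * real m))"
  proof -
    have "ln (card I) / (2 * real m) = 2\<^sup>2 * (ln (card I) * (1 / (8 * m)))"
      by (simp add: field_simps)
    then show ?thesis
      by (simp only: real_sqrt_mult real_sqrt_abs abs_numeral)
  qed
  finally show ?thesis .
qed

text \<open>The event \<open>A g\<close> may depend on the sample; choosing it among \<open>|G|\<close> candidates costs only \<open>ln |G|\<close>.\<close>
lemma expectation_empirical_dev_adaptive_le:
  fixes r :: "('g \<times> 'a list) pmf" and A :: "'g \<Rightarrow> 'a set"
  assumes "map_pmf snd r = replicate_pmf m D" and "set_pmf (map_pmf fst r) \<subseteq> G"
    and "finite G" "G \<noteq> {}" "m > 0"
  shows "measure_pmf.expectation r (\<lambda>(g, S). empirical_dev D (A g) S) \<le> sqrt (ln (card G) / (2 * real m))"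
proof -
  have "measure_pmf.expectation r (\<lambda>(g, S). empirical_dev D (A g) S)
      \<le> measure_pmf.expectation r (\<lambda>(g, S). Max ((\<lambda>h. empirical_dev D (A h) S) ` G))"
  proof (intro integral_mono_AE)
    show "AE t in r. (case t of (g, S) \<Rightarrow> empirical_dev D (A g) S)
                     \<le> (case t of (g, S) \<Rightarrow> Max ((\<lambda>h. empirical_dev D (A h) S) ` G))"
      using assms(2,3) by (auto simp: AE_measure_pmf_iff intro!: Max_ge)
    have "\<bar>Max ((\<lambda>h. empirical_dev D (A h) S) ` G)\<bar> \<le> 1" for S
    proof -
      have "Max ((\<lambda>h. empirical_dev D (A h) S) ` G) \<in> (\<lambda>h. empirical_dev D (A h) S) ` G"
        using assms(3,4) by (intro Max_in) auto
      then show ?thesis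
        using abs_empirical_dev_le_1 by auto
    qed
    then show "integrable r (\<lambda>(g, S). Max ((\<lambda>h. empirical_dev D (A h) S) ` G))"
      by (auto intro!: integrable_measure_pmf_bounded[where B=1])
  qed (auto intro!: integrable_measure_pmf_bounded[where B=1] simp: abs_empirical_dev_le_1)
  also have "\<dots> = measure_pmf.expectation (map_pmf snd r) (\<lambda>S. Max ((\<lambda>h. empirical_dev D (A h) S) ` G))"
    by (simp add: case_prod_beta')
  also have "\<dots> \<le> sqrt (ln (card G) / (2 * real m))"
    unfolding assms(1) using assms(3-5) by (rule expectation_Max_empirical_dev_le)
  finally show ?thesis .
qed

section \<open>Adaptively corrupted samples\<close>

lemma INF_tv_dist_cost_ball_le_empirical_dev:
  fixes p :: "('a list \<times> 'a list) pmf"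
  assumes \<rho>: "cost_fun \<rho>" and ball: "\<And>S S'. (S, S') \<in> set_pmf p \<Longrightarrow> S' \<in> cost_ball_tuple \<rho> S"
  defines "Q \<equiv> bind_pmf p (\<lambda>(S, S'). unif_coord S)"
  shows "(INF D'\<in>cost_ball_dist \<rho> D. tv_dist D' (bind_pmf p (\<lambda>(S, S'). unif_coord S')))
           \<le> measure_pmf.expectation p (\<lambda>(S, S'). empirical_dev D {x. pmf D x < pmf Q x} S)"
proof -
  define A where "A = {x. pmf D x < pmf Q x}"
  define W where "W = bind_pmf p (\<lambda>(S, S'). map_pmf (\<lambda>i. (S ! i, S' ! i)) (pmf_of_set {..<length S}))"
  have W: "map_pmf fst W = Q" "map_pmf snd W = bind_pmf p (\<lambda>(S, S'). unif_coord S')"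
    "(\<integral>\<^sup>+w. \<rho> (fst w) (snd w) \<partial>W) \<le> 1"
    unfolding W_def Q_def by (rule coordinate_coupling[OF \<rho>], fact ball)+
  obtain M where M_fst: "map_pmf fst M = D" and M_snd: "map_pmf snd M = Q"
    and M: "measure_pmf.prob M {x. fst x \<noteq> snd x} \<le> measure_pmf.prob Q A - measure_pmf.prob D A"
    unfolding A_def by (rule pmf_maximal_coupling)
  obtain D' where D': "D' \<in> cost_ball_dist \<rho> D"
    and tv: "tv_dist D' (map_pmf snd W) \<le> measure_pmf.prob M {x. fst x \<noteq> snd x}"
    by (rule cost_ball_dist_tv_dist_le[OF \<rho> W(3) M_fst M_snd[folded W(1)]])
  from tv M have "tv_dist D' (map_pmf snd W) \<le> measure_pmf.prob Q A - measure_pmf.prob D A"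
    by (rule order_trans)
  also have "measure_pmf.prob Q A - measure_pmf.prob D A
      = measure_pmf.expectation p (\<lambda>(S, S'). empirical_dev D A S)"
    unfolding Q_def measure_bind_pmf empirical_dev_def case_prod_beta'
    by (subst Bochner_Integration.integral_diff)
       (auto intro!: integrable_measure_pmf_bounded[where B=1])
  finally have "tv_dist D' (bind_pmf p (\<lambda>(S, S'). unif_coord S'))
      \<le> measure_pmf.expectation p (\<lambda>(S, S'). empirical_dev D A S)"
    unfolding W(2) .
  moreover have "(INF D'\<in>cost_ball_dist \<rho> D. tv_dist D' (bind_pmf p (\<lambda>(S, S'). unif_coord S')))
      \<le> tv_dist D' (bind_pmf p (\<lambda>(S, S'). unif_coord S'))"
    by (rule cINF_lower[OF bdd_belowI[where m=0] D']) (auto simp: tv_dist_nonneg)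
  ultimately show ?thesis
    unfolding A_def by linarith
qed

lemma expectation_INF_tv_dist_le_empirical_dev:
  fixes r :: "('a list \<times> 'g \<times> 'a list) pmf"
  assumes \<rho>: "cost_fun \<rho>" and ball: "\<And>S' g S. (S', g, S) \<in> set_pmf r \<Longrightarrow> S' \<in> cost_ball_tuple \<rho> S"
  obtains A :: "'g \<Rightarrow> 'a set" where
    "measure_pmf.expectation (map_pmf (\<lambda>t. fst (snd t)) r)
       (\<lambda>g0. INF D'\<in>cost_ball_dist \<rho> D.
          tv_dist D' (bind_pmf (cond_pmf r {t. fst (snd t) = g0}) (\<lambda>(S', g, S). unif_coord S')))
     \<le> measure_pmf.expectation r (\<lambda>(S', g, S). empirical_dev D (A g) S)"
proof
  define C where "C g0 = cond_pmf r {t. fst (snd t) = g0}" for g0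
  define A where "A g0 = {x. pmf D x < pmf (bind_pmf (C g0) (\<lambda>(S', g, S). unif_coord S)) x}" for g0
  define \<delta> where "\<delta> g0 = measure_pmf.expectation (C g0) (\<lambda>(S', g, S). empirical_dev D (A g0) S)" for g0
  have INF_le: "(INF D'\<in>cost_ball_dist \<rho> D. tv_dist D' (bind_pmf (C g0) (\<lambda>(S', g, S). unif_coord S'))) \<le> \<delta> g0"
    if "g0 \<in> set_pmf (map_pmf (\<lambda>t. fst (snd t)) r)" for g0
  proof -
    define p where "p = map_pmf (\<lambda>(S', g, S). (S, S')) (C g0)"
    have "set_pmf (C g0) = set_pmf r \<inter> {t. fst (snd t) = g0}"
      unfolding C_def using that by (intro set_cond_pmf) auto
    then have "S' \<in> cost_ball_tuple \<rho> S" if "(S, S') \<in> set_pmf p" for S S'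
      using that ball by (auto simp: p_def)
    from INF_tv_dist_cost_ball_le_empirical_dev[where p=p and D=D, OF \<rho> this]
    show ?thesis
      by (simp add: p_def \<delta>_def A_def bind_map_pmf case_prod_beta')
  qed
  have INF_nonneg: "0 \<le> (INF D'\<in>cost_ball_dist \<rho> D. tv_dist D' (bind_pmf (C g0) (\<lambda>(S', g, S). unif_coord S')))"
    for g0
    using self_in_cost_ball_dist[OF \<rho>] by (intro cINF_greatest) (auto simp: tv_dist_nonneg)
  have "measure_pmf.expectation (map_pmf (\<lambda>t. fst (snd t)) r)
          (\<lambda>g0. INF D'\<in>cost_ball_dist \<rho> D. tv_dist D' (bind_pmf (C g0) (\<lambda>(S', g, S). unif_coord S')))
        \<le> measure_pmf.expectation (map_pmf (\<lambda>t. fst (snd t)) r) \<delta>"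
  proof (intro integral_mono_AE' integrable_measure_pmf_bounded[where B=1])
    fix g0
    have "-1 \<le> \<delta> g0" "\<delta> g0 \<le> 1"
      unfolding \<delta>_def case_prod_beta' using abs_empirical_dev_le_1
      by (auto simp: abs_le_iff intro!: measure_pmf.integral_ge_const measure_pmf.integral_le_const
                     integrable_measure_pmf_bounded[where B=1])
    then show "\<bar>\<delta> g0\<bar> \<le> 1"
      by linarith
  qed (intro AE_pmfI INF_le order_trans[OF INF_nonneg INF_le]; assumption)+
  also have "\<dots> = measure_pmf.expectation r (\<lambda>(S', g, S). empirical_dev D (A g) S)"
    unfolding \<delta>_def C_def case_prod_beta'
    by (rule expectation_cond_pmf_fibers[where B=1]) (rule abs_empirical_dev_le_1)
  finally show "measure_pmf.expectation (map_pmf (\<lambda>t. fst (snd t)) r)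
       (\<lambda>g0. INF D'\<in>cost_ball_dist \<rho> D.
          tv_dist D' (bind_pmf (cond_pmf r {t. fst (snd t) = g0}) (\<lambda>(S', g, S). unif_coord S')))
     \<le> measure_pmf.expectation r (\<lambda>(S', g, S). empirical_dev D (A g) S)"
    unfolding C_def .
qed

lemma expectation_goal_dist:
  fixes r :: "('a list \<times> 'g \<times> 'b) pmf" and F :: "'a pmf \<Rightarrow> real"
  assumes J: "map_pmf (\<lambda>(S', g, S). (S', g)) r = J"
  shows "measure_pmf.expectation (map_pmf snd J) (\<lambda>g0. F (goal_dist J g0))
       = measure_pmf.expectation (map_pmf (\<lambda>t. fst (snd t)) r)
           (\<lambda>g0. F (bind_pmf (cond_pmf r {t. fst (snd t) = g0}) (\<lambda>(S', g, S). unif_coord S')))"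
proof -
  have snd_J: "map_pmf snd J = map_pmf (\<lambda>t. fst (snd t)) r"
    by (simp add: J[symmetric] map_pmf_comp case_prod_beta')
  have "goal_dist J g0 = bind_pmf (cond_pmf r {t. fst (snd t) = g0}) (\<lambda>(S', g, S). unif_coord S')"
    if "g0 \<in> set_pmf (map_pmf snd J)" for g0
  proof -
    have "(\<lambda>(S', g, S). (S', g)) -` {p. snd p = g0} = {t. fst (snd t) = g0}"
      by auto
    moreover have "set_pmf r \<inter> {t. fst (snd t) = g0} \<noteq> {}"
      using that unfolding snd_J by force
    ultimately show ?thesis
      unfolding goal_dist_def J[symmetric]
      by (subst cond_map_pmf) (auto simp: bind_map_pmf case_prod_beta')
  qed
  then show ?thesis
    unfolding snd_J by (intro integral_cong_AE) (auto simp: AE_measure_pmf_iff snd_J)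
qed

theorem mainTheorem6:
  fixes D :: "'a::countable pmf" and m :: nat and \<rho> :: "'a \<Rightarrow> 'a \<Rightarrow> ennreal"
    and \<mu> :: "'a list pmf" and J :: "('a list \<times> 'g) pmf" and G :: "'g set"
  assumes "m \<ge> 1"
    and "cost_fun \<rho>"
    and "\<mu> \<in> adaptive_class m \<rho> D"
    and "map_pmf fst J = \<mu>"
    and "finite G" and "G \<noteq> {}"
    and "set_pmf (map_pmf snd J) \<subseteq> G"
  shows "measure_pmf.expectation (map_pmf snd J)
           (\<lambda>g0. INF D' \<in> cost_ball_dist \<rho> D. tv_dist D' (goal_dist J g0))
         \<le> sqrt (ln (real (card G)) / (2 * real m))"
proof -
  obtain \<nu> where \<nu>: "map_pmf fst \<nu> = \<mu>" "map_pmf snd \<nu> = replicate_pmf m D"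
    and \<nu>_ball: "\<forall>p\<in>set_pmf \<nu>. fst p \<in> cost_ball_tuple \<rho> (snd p)"
    using assms(3) unfolding adaptive_class_def by blast
  have "map_pmf fst J = map_pmf fst \<nu>"
    using assms(4) \<nu>(1) by simp
  then obtain r :: "('a list \<times> 'g \<times> 'a list) pmf"
    where r_J: "map_pmf (\<lambda>(S', g, S). (S', g)) r = J" and r_\<nu>: "map_pmf (\<lambda>(S', g, S). (S', S)) r = \<nu>"
    by (rule pmf_gluing)
  have "S' \<in> cost_ball_tuple \<rho> S" if "(S', g, S) \<in> set_pmf r" for S' g S
    using \<nu>_ball that unfolding r_\<nu>[symmetric] by force
  then obtain A where
    "measure_pmf.expectation (map_pmf snd J)
       (\<lambda>g0. INF D' \<in> cost_ball_dist \<rho> D. tv_dist D' (goal_dist J g0))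
     \<le> measure_pmf.expectation r (\<lambda>(S', g, S). empirical_dev D (A g) S)"
    unfolding expectation_goal_dist[OF r_J, where F="\<lambda>Q. INF D' \<in> cost_ball_dist \<rho> D. tv_dist D' Q"]
    by (rule expectation_INF_tv_dist_le_empirical_dev[where r=r, OF assms(2)])
  also have "\<dots> = measure_pmf.expectation (map_pmf (\<lambda>(S', g, S). (g, S)) r) (\<lambda>(g, S). empirical_dev D (A g) S)"
    by (simp add: case_prod_beta')
  also have "\<dots> \<le> sqrt (ln (real (card G)) / (2 * real m))"
    using assms(1,5-7)
    by (intro expectation_empirical_dev_adaptive_le)
       (auto simp: \<nu>(2)[symmetric] r_\<nu>[symmetric] r_J[symmetric] map_pmf_comp case_prod_beta')
  finally show ?thesis .
qed

end
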